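(* Let $X$ be a finite connected poset with $|X|>2$. Then the group $\mathcal{P}(X)$ is isomorphic to $\mathrm{Aut}^\pm(X)$.
   Context: $\mathrm{Aut}(X)$ is the group of poset automorphisms of $X$, $\mathrm{Aut}^-(X)$ the set of anti-automorphisms (order-reversing bijections $X\to X$), and $\mathrm{Aut}^\pm(X)=\mathrm{Aut}(X)\cup\mathrm{Aut}^-(X)$, a group under composition. For $x<y$ in $X$, $e_{xy}$ denotes the incidence-algebra basis element (indicator of $(x,y)$), and $B=\{e_{xy}:x<y\}$. A bijection $\theta:B\to B$ is proper if there is $\lambda\in\mathrm{Aut}(X)$ with $\theta(e_{xy})=e_{\lambda(x)\lambda(y)}$ for all $x<y$, or $\lambda\in\mathrm{Aut}^-(X)$ with $\theta(e_{xy})=e_{\lambda(y)\lambda(x)}$ for all $x<y$; $\mathcal{P}(X)$ is the group of proper bijections of $B$. *)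

theory Defs
  imports "HOL-Algebra.Group" "HOL-Library.FuncSet"
begin

definition poset_less :: "'a rel \<Rightarrow> 'a \<Rightarrow> 'a \<Rightarrow> bool" where
  "poset_less r x y \<longleftrightarrow> (x, y) \<in> r \<and> x \<noteq> y"

definition poset_connected :: "'a set \<Rightarrow> 'a rel \<Rightarrow> bool" where
  "poset_connected X r \<longleftrightarrow> X \<noteq> {} \<and>
     (\<forall>x\<in>X. \<forall>y\<in>X. (x, y) \<in> ({(u, v). u \<in> X \<and> v \<in> X \<and> ((u, v) \<in> r \<or> (v, u) \<in> r)})\<^sup>*)"

definition is_poset_aut :: "'a set \<Rightarrow> 'a rel \<Rightarrow> ('a \<Rightarrow> 'a) \<Rightarrow> bool" where
  "is_poset_aut X r f \<longleftrightarrow> bij_betw f X X \<and>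
     (\<forall>x\<in>X. \<forall>y\<in>X. (x, y) \<in> r \<longleftrightarrow> (f x, f y) \<in> r)"

definition is_poset_antiaut :: "'a set \<Rightarrow> 'a rel \<Rightarrow> ('a \<Rightarrow> 'a) \<Rightarrow> bool" where
  "is_poset_antiaut X r f \<longleftrightarrow> bij_betw f X X \<and>
     (\<forall>x\<in>X. \<forall>y\<in>X. (x, y) \<in> r \<longleftrightarrow> (f y, f x) \<in> r)"

definition aut_pm_group :: "'a set \<Rightarrow> 'a rel \<Rightarrow> ('a \<Rightarrow> 'a) monoid" where
  "aut_pm_group X r = \<lparr> carrier = {f. f \<in> extensional X \<and>
        (is_poset_aut X r f \<or> is_poset_antiaut X r f)},
     mult = (\<lambda>f g. compose X f g), one = restrict id X \<rparr>"

text \<open>The basis B of the incidence algebra: e_xy for x < y is represented by the pair (x,y).\<close>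
definition inc_basis :: "'a set \<Rightarrow> 'a rel \<Rightarrow> ('a \<times> 'a) set" where
  "inc_basis X r = {(x, y). x \<in> X \<and> y \<in> X \<and> poset_less r x y}"

definition is_proper :: "'a set \<Rightarrow> 'a rel \<Rightarrow> ('a \<times> 'a \<Rightarrow> 'a \<times> 'a) \<Rightarrow> bool" where
  "is_proper X r \<theta> \<longleftrightarrow> bij_betw \<theta> (inc_basis X r) (inc_basis X r) \<and>
     (\<exists>f. (is_poset_aut X r f \<and> (\<forall>(x, y)\<in>inc_basis X r. \<theta> (x, y) = (f x, f y)))
        \<or> (is_poset_antiaut X r f \<and> (\<forall>(x, y)\<in>inc_basis X r. \<theta> (x, y) = (f y, f x))))"

definition proper_group :: "'a set \<Rightarrow> 'a rel \<Rightarrow> ('a \<times> 'a \<Rightarrow> 'a \<times> 'a) monoid" where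
  "proper_group X r = \<lparr> carrier = {\<theta>. \<theta> \<in> extensional (inc_basis X r) \<and> is_proper X r \<theta>},
     mult = (\<lambda>f g. compose (inc_basis X r) f g), one = restrict id (inc_basis X r) \<rparr>"

end

theory Submission
  imports Defs
begin

text \<open>Every \<lambda> in Aut\<plusminus>(X) induces the proper bijection sending e_xy to e_(\<lambda>x)(\<lambda>y)
  (resp. to e_(\<lambda>y)(\<lambda>x)), and this is a homomorphism from Aut\<plusminus>(X) to P(X), surjective by
  the very definition of properness; an automorphism and an anti-automorphism never coincide
  once some x < y exists, so the type of \<lambda> is well defined. For injectivity, connectedness gives
  every point a strictly comparable partner, so an induced bijection determines \<lambda> pointwise
  once the type of \<lambda> is fixed. An automorphism \<lambda> and an anti-automorphism \<mu> cannot induce the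
  same bijection: since |X| > 2 some u is strictly comparable with two distinct a, b, and
  comparing the images of the basis elements joining u to a and to b gives \<mu> a = \<lambda> u = \<mu> b.\<close>

definition rel_iso_on :: "'a set \<Rightarrow> 'a rel \<Rightarrow> 'a rel \<Rightarrow> ('a \<Rightarrow> 'a) \<Rightarrow> bool" where
  "rel_iso_on X r s f \<longleftrightarrow> bij_betw f X X \<and> (\<forall>x\<in>X. \<forall>y\<in>X. (x, y) \<in> r \<longleftrightarrow> (f x, f y) \<in> s)"

lemma is_poset_aut_iff_rel_iso_on: "is_poset_aut X r f \<longleftrightarrow> rel_iso_on X r r f"
  by (simp add: is_poset_aut_def rel_iso_on_def)

lemma is_poset_antiaut_iff_rel_iso_on: "is_poset_antiaut X r f \<longleftrightarrow> rel_iso_on X r (r\<inverse>) f"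
  by (simp add: is_poset_antiaut_def rel_iso_on_def)

lemma rel_iso_on_converse [simp]: "rel_iso_on X (r\<inverse>) s f \<longleftrightarrow> rel_iso_on X r (s\<inverse>) f"
  unfolding rel_iso_on_def by blast

lemma rel_iso_on_restrict [simp]: "rel_iso_on X r s (restrict f X) \<longleftrightarrow> rel_iso_on X r s f"
  unfolding rel_iso_on_def by (simp cong: bij_betw_cong)

lemma rel_iso_on_id: "rel_iso_on X r r id"
  unfolding rel_iso_on_def by (simp add: bij_betw_def)

lemma rel_iso_on_compose:
  assumes "rel_iso_on X s t f" and "rel_iso_on X r s g"
  shows "rel_iso_on X r t (compose X f g)"
  using assms bij_betw_compose[of g X X f X] bij_betw_apply[of g X X]
  unfolding rel_iso_on_def by (simp add: compose_eq)

lemma rel_iso_on_inv: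
  assumes "rel_iso_on X r s f"
  shows "rel_iso_on X s r (inv_into X f)"
proof -
  have f: "bij_betw f X X" using assms by (simp add: rel_iso_on_def)
  have "(x, y) \<in> s \<longleftrightarrow> (inv_into X f x, inv_into X f y) \<in> r" if "x \<in> X" "y \<in> X" for x y
    using assms that bij_betw_inv_into_right[OF f] bij_betw_apply[OF bij_betw_inv_into[OF f]]
    unfolding rel_iso_on_def by metis
  then show ?thesis using f by (simp add: rel_iso_on_def bij_betw_inv_into)
qed

lemma aut_pm_group_carrier:
  "f \<in> carrier (aut_pm_group X r) \<longleftrightarrow>
     f \<in> extensional X \<and> (rel_iso_on X r r f \<or> rel_iso_on X r (r\<inverse>) f)"
  by (simp add: aut_pm_group_def is_poset_aut_iff_rel_iso_on is_poset_antiaut_iff_rel_iso_on)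

lemma compose_in_aut_pm_group:
  assumes "f \<in> carrier (aut_pm_group X r)" and "g \<in> carrier (aut_pm_group X r)"
  shows "compose X f g \<in> carrier (aut_pm_group X r)"
  using assms rel_iso_on_compose[of X r r f r g] rel_iso_on_compose[of X "r\<inverse>" "r\<inverse>" f r g]
    rel_iso_on_compose[of X r "r\<inverse>" f r g] rel_iso_on_compose[of X "r\<inverse>" r f r g]
  by (auto simp: aut_pm_group_carrier compose_def)

lemma group_aut_pm_group: "group (aut_pm_group X r)"
proof (rule groupI)
  let ?G = "aut_pm_group X r"
  have funcset: "f \<in> X \<rightarrow> X" if "f \<in> carrier ?G" for f
    using that by (auto simp: aut_pm_group_carrier rel_iso_on_def dest: bij_betw_imp_funcset)
  show "f \<otimes>\<^bsub>?G\<^esub> g \<in> carrier ?G" if "f \<in> carrier ?G" "g \<in> carrier ?G" for f g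
    using compose_in_aut_pm_group[OF that] by (simp add: aut_pm_group_def)
  show "\<one>\<^bsub>?G\<^esub> \<in> carrier ?G"
    unfolding aut_pm_group_carrier by (simp add: aut_pm_group_def rel_iso_on_id)
  show "f \<otimes>\<^bsub>?G\<^esub> g \<otimes>\<^bsub>?G\<^esub> h = f \<otimes>\<^bsub>?G\<^esub> (g \<otimes>\<^bsub>?G\<^esub> h)"
    if "f \<in> carrier ?G" "g \<in> carrier ?G" "h \<in> carrier ?G" for f g h
    using funcset[OF that(2)] funcset[OF that(3)] by (simp add: aut_pm_group_def compose_assoc)
  show "\<one>\<^bsub>?G\<^esub> \<otimes>\<^bsub>?G\<^esub> f = f" if "f \<in> carrier ?G" for f
    using that funcset[OF that] Id_compose[of f X X]
    by (simp add: aut_pm_group_def id_def)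
  show "\<exists>g\<in>carrier ?G. g \<otimes>\<^bsub>?G\<^esub> f = \<one>\<^bsub>?G\<^esub>" if f: "f \<in> carrier ?G" for f
  proof
    have "bij_betw f X X" using f by (auto simp: aut_pm_group_carrier rel_iso_on_def)
    then show "restrict (inv_into X f) X \<otimes>\<^bsub>?G\<^esub> f = \<one>\<^bsub>?G\<^esub>"
      using compose_inv_into_id[of f X X] by (simp add: aut_pm_group_def id_def)
    show "restrict (inv_into X f) X \<in> carrier ?G"
      using f rel_iso_on_inv[of X r r f] rel_iso_on_inv[of X r "r\<inverse>" f]
      by (auto simp: aut_pm_group_carrier)
  qed
qed

lemma map_prod_in_inc_basis:
  assumes f: "rel_iso_on X r s f" and p: "p \<in> inc_basis X r"
  shows "map_prod f f p \<in> inc_basis X s"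
proof -
  obtain x y where xy: "p = (x, y)" "x \<in> X" "y \<in> X" "(x, y) \<in> r" "x \<noteq> y"
    using p by (auto simp: inc_basis_def poset_less_def)
  have "f x \<in> X" "f y \<in> X" "f x \<noteq> f y"
    using f xy(2,3,5) by (auto simp: rel_iso_on_def bij_betw_def inj_on_def)
  moreover have "(f x, f y) \<in> s" using f xy(2-4) by (simp add: rel_iso_on_def)
  ultimately show ?thesis using xy(1) by (simp add: inc_basis_def poset_less_def)
qed

lemma bij_betw_map_prod_inc_basis:
  assumes f: "rel_iso_on X r s f"
  shows "bij_betw (map_prod f f) (inc_basis X r) (inc_basis X s)"
proof (rule bij_betwI)
  let ?g = "inv_into X f"
  have bij: "bij_betw f X X" using f by (simp add: rel_iso_on_def)
  have sub: "q \<in> X \<times> X" if "q \<in> inc_basis X t" for q t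
    using that by (auto simp: inc_basis_def)
  show "map_prod f f \<in> inc_basis X r \<rightarrow> inc_basis X s"
    using map_prod_in_inc_basis[OF f] by blast
  show "map_prod ?g ?g \<in> inc_basis X s \<rightarrow> inc_basis X r"
    using map_prod_in_inc_basis[OF rel_iso_on_inv[OF f]] by blast
  show "map_prod ?g ?g (map_prod f f p) = p" if "p \<in> inc_basis X r" for p
    using sub[OF that] bij_betw_inv_into_left[OF bij] by auto
  show "map_prod f f (map_prod ?g ?g q) = q" if "q \<in> inc_basis X s" for q
    using sub[OF that] bij_betw_inv_into_right[OF bij] by auto
qed

lemma bij_betw_swap_inc_basis: "bij_betw prod.swap (inc_basis X (r\<inverse>)) (inc_basis X r)"
  by (rule bij_betwI[where g = prod.swap]) (auto simp: inc_basis_def poset_less_def)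

lemma aut_not_antiaut:
  assumes "antisym r" and "inc_basis X r \<noteq> {}" and "is_poset_aut X r f"
  shows "\<not> is_poset_antiaut X r f"
proof
  assume "is_poset_antiaut X r f"
  obtain p where p: "p \<in> inc_basis X r" using assms(2) by blast
  have "map_prod f f p \<in> inc_basis X r" and "map_prod f f p \<in> inc_basis X (r\<inverse>)"
    using map_prod_in_inc_basis[OF _ p] assms(3) \<open>is_poset_antiaut X r f\<close>
    by (simp_all add: is_poset_aut_iff_rel_iso_on is_poset_antiaut_iff_rel_iso_on)
  then show False
    using assms(1) by (auto simp: inc_basis_def poset_less_def antisym_def)
qed

definition induced_proper :: "'a set \<Rightarrow> 'a rel \<Rightarrow> ('a \<Rightarrow> 'a) \<Rightarrow> 'a \<times> 'a \<Rightarrow> 'a \<times> 'a" where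
  "induced_proper X r f = restrict
     (if is_poset_aut X r f then map_prod f f else prod.swap \<circ> map_prod f f) (inc_basis X r)"

lemma induced_proper_apply:
  "p \<in> inc_basis X r \<Longrightarrow> induced_proper X r f p =
     (if is_poset_aut X r f then map_prod f f p else prod.swap (map_prod f f p))"
  by (simp add: induced_proper_def)

lemma induced_proper_antiaut_apply:
  assumes "antisym r" and "is_poset_antiaut X r f" and "p \<in> inc_basis X r"
  shows "induced_proper X r f p = prod.swap (map_prod f f p)"
  using assms aut_not_antiaut[OF assms(1)] by (auto simp: induced_proper_apply)

lemma induced_proper_in_carrier:
  assumes f: "f \<in> carrier (aut_pm_group X r)"
  shows "induced_proper X r f \<in> carrier (proper_group X r)"
proof -
  let ?B = "inc_basis X r"
  consider (aut) "is_poset_aut X r f" | (anti) "is_poset_antiaut X r f" "\<not> is_poset_aut X r f"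
    using f by (auto simp: aut_pm_group_def)
  then have "is_proper X r (induced_proper X r f)"
  proof cases
    case aut
    then have "bij_betw (map_prod f f) ?B ?B"
      by (simp add: bij_betw_map_prod_inc_basis is_poset_aut_iff_rel_iso_on)
    then show ?thesis
      using aut by (auto simp: is_proper_def induced_proper_def)
  next
    case anti
    then have "bij_betw (prod.swap \<circ> map_prod f f) ?B ?B"
      using bij_betw_trans[OF bij_betw_map_prod_inc_basis bij_betw_swap_inc_basis]
      by (simp add: is_poset_antiaut_iff_rel_iso_on)
    then show ?thesis
      using anti by (auto simp: is_proper_def induced_proper_def)
  qed
  then show ?thesis by (simp add: proper_group_def induced_proper_def)
qed

lemma is_poset_aut_compose:
  assumes "antisym r" and "inc_basis X r \<noteq> {}"
    and f: "f \<in> carrier (aut_pm_group X r)" and g: "g \<in> carrier (aut_pm_group X r)"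
  shows "is_poset_aut X r (compose X f g) \<longleftrightarrow> (is_poset_aut X r f \<longleftrightarrow> is_poset_aut X r g)"
proof -
  have aut_or_antiaut: "is_poset_aut X r h \<longleftrightarrow> \<not> is_poset_antiaut X r h"
    if "h \<in> carrier (aut_pm_group X r)" for h
    using that aut_not_antiaut[OF assms(1,2)] by (auto simp: aut_pm_group_def)
  show ?thesis
    using aut_or_antiaut[OF f] aut_or_antiaut[OF g] aut_or_antiaut[OF compose_in_aut_pm_group[OF f g]]
      rel_iso_on_compose[of X r r f r g] rel_iso_on_compose[of X "r\<inverse>" "r\<inverse>" f r g]
      rel_iso_on_compose[of X r "r\<inverse>" f r g] rel_iso_on_compose[of X "r\<inverse>" r f r g]
    by (auto simp: is_poset_aut_iff_rel_iso_on is_poset_antiaut_iff_rel_iso_on)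
qed

lemma induced_proper_compose:
  assumes "antisym r"
    and f: "f \<in> carrier (aut_pm_group X r)" and g: "g \<in> carrier (aut_pm_group X r)"
  shows "induced_proper X r (compose X f g) =
    compose (inc_basis X r) (induced_proper X r f) (induced_proper X r g)"
proof (rule extensionalityI)
  show "induced_proper X r (compose X f g) \<in> extensional (inc_basis X r)"
    by (simp add: induced_proper_def)
  show "compose (inc_basis X r) (induced_proper X r f) (induced_proper X r g)
    \<in> extensional (inc_basis X r)"
    by (simp add: compose_def)
  fix p assume p: "p \<in> inc_basis X r"
  have gp: "induced_proper X r g p \<in> inc_basis X r"
    using induced_proper_in_carrier[OF g] p
    by (auto simp: proper_group_def is_proper_def dest: bij_betw_apply)
  obtain x y where xy: "p = (x, y)" "x \<in> X" "y \<in> X"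
    using p by (auto simp: inc_basis_def)
  have "g x \<in> X" "g y \<in> X"
    using g xy(2,3) by (auto simp: aut_pm_group_carrier rel_iso_on_def dest: bij_betw_apply)
  then show "induced_proper X r (compose X f g) p =
    compose (inc_basis X r) (induced_proper X r f) (induced_proper X r g) p"
    using p gp xy is_poset_aut_compose[OF assms(1) _ f g]
    by (auto simp: compose_eq induced_proper_apply)
qed

lemma induced_proper_surj:
  assumes "antisym r"
  shows "carrier (proper_group X r) \<subseteq> induced_proper X r ` carrier (aut_pm_group X r)"
proof
  fix \<theta> assume "\<theta> \<in> carrier (proper_group X r)"
  then have ext: "\<theta> \<in> extensional (inc_basis X r)" and "is_proper X r \<theta>"
    by (simp_all add: proper_group_def)
  then obtain f where f: "(is_poset_aut X r f \<and> (\<forall>(x, y)\<in>inc_basis X r. \<theta> (x, y) = (f x, f y)))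
      \<or> (is_poset_antiaut X r f \<and> (\<forall>(x, y)\<in>inc_basis X r. \<theta> (x, y) = (f y, f x)))"
    unfolding is_proper_def by blast
  let ?f = "restrict f X"
  have kinds: "is_poset_aut X r ?f \<longleftrightarrow> is_poset_aut X r f"
    "is_poset_antiaut X r ?f \<longleftrightarrow> is_poset_antiaut X r f"
    by (simp_all add: is_poset_aut_iff_rel_iso_on is_poset_antiaut_iff_rel_iso_on)
  have "induced_proper X r ?f = \<theta>"
  proof (rule extensionalityI[OF _ ext])
    show "induced_proper X r ?f \<in> extensional (inc_basis X r)"
      by (simp add: induced_proper_def)
    fix p assume p: "p \<in> inc_basis X r"
    then obtain x y where xy: "p = (x, y)" "x \<in> X" "y \<in> X"
      by (auto simp: inc_basis_def)
    from f show "induced_proper X r ?f p = \<theta> p"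
    proof (elim disjE conjE)
      assume "is_poset_aut X r f" "\<forall>(x, y)\<in>inc_basis X r. \<theta> (x, y) = (f x, f y)"
      then show ?thesis using p xy kinds by (auto simp: induced_proper_apply)
    next
      assume "is_poset_antiaut X r f" "\<forall>(x, y)\<in>inc_basis X r. \<theta> (x, y) = (f y, f x)"
      then show ?thesis
        using p xy kinds induced_proper_antiaut_apply[OF assms _ p, of ?f] by auto
    qed
  qed
  moreover have "?f \<in> carrier (aut_pm_group X r)"
    using f kinds by (auto simp: aut_pm_group_def)
  ultimately show "\<theta> \<in> induced_proper X r ` carrier (aut_pm_group X r)"
    by blast
qed

lemma rtrancl_edge_leaving:
  assumes "(a, b) \<in> R\<^sup>*" and "a \<in> S" and "b \<notin> S"
  shows "\<exists>u v. (u, v) \<in> R \<and> u \<in> S \<and> v \<notin> S"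
  using assms by (induction rule: rtrancl_induct) auto

definition strictly_comparable :: "'a set \<Rightarrow> 'a rel \<Rightarrow> 'a \<Rightarrow> 'a \<Rightarrow> bool" where
  "strictly_comparable X r u v \<longleftrightarrow> (u, v) \<in> inc_basis X r \<or> (v, u) \<in> inc_basis X r"

lemma strictly_comparable_sym: "strictly_comparable X r u v \<longleftrightarrow> strictly_comparable X r v u"
  by (auto simp: strictly_comparable_def)

lemma strictly_comparableD: "strictly_comparable X r u v \<Longrightarrow> u \<in> X \<and> v \<in> X \<and> u \<noteq> v"
  by (auto simp: strictly_comparable_def inc_basis_def poset_less_def)

lemma poset_connected_comparable_leaving:
  assumes "poset_connected X r" and "x \<in> S" and "z \<in> X - S" and "S \<subseteq> X"
  shows "\<exists>u\<in>S. \<exists>v. v \<notin> S \<and> strictly_comparable X r u v"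
proof -
  have "(x, z) \<in> {(u, v). u \<in> X \<and> v \<in> X \<and> ((u, v) \<in> r \<or> (v, u) \<in> r)}\<^sup>*"
    using assms unfolding poset_connected_def by blast
  from rtrancl_edge_leaving[OF this assms(2)] assms(3) obtain u v
    where "u \<in> X" "v \<in> X" "(u, v) \<in> r \<or> (v, u) \<in> r" "u \<in> S" "v \<notin> S"
    by blast
  then show ?thesis
    by (auto simp: strictly_comparable_def inc_basis_def poset_less_def)
qed

lemma exists_strictly_comparable:
  assumes "poset_connected X r" and "2 \<le> card X" and "x \<in> X"
  shows "\<exists>y. strictly_comparable X r x y"
proof -
  have "\<not> X \<subseteq> {x}" using assms(2) card_mono[of "{x}" X] by auto
  then obtain z where "z \<in> X - {x}" by blast
  then show ?thesis
    using poset_connected_comparable_leaving[OF assms(1), of x "{x}" z] assms(3) by auto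
qed

lemma exists_two_strictly_comparable:
  assumes "poset_connected X r" and "2 < card X"
  shows "\<exists>u a b. a \<noteq> b \<and> strictly_comparable X r u a \<and> strictly_comparable X r u b"
proof -
  obtain x where x: "x \<in> X" using assms(2) by fastforce
  then obtain y where xy: "strictly_comparable X r x y"
    using exists_strictly_comparable[OF assms(1)] assms(2) by fastforce
  have "card {x, y} \<le> 2" by (simp add: card_insert_if)
  then have "\<not> X \<subseteq> {x, y}" using assms(2) card_mono[of "{x, y}" X] by auto
  then obtain z where "z \<in> X - {x, y}" by blast
  then obtain u v where "u \<in> {x, y}" "v \<notin> {x, y}" "strictly_comparable X r u v"
    using poset_connected_comparable_leaving[OF assms(1), of x "{x, y}" z]
      x strictly_comparableD[OF xy] by auto
  then show ?thesis
    using xy strictly_comparable_sym[of X r x y] strictly_comparableD[OF xy] by blast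
qed

lemma induced_proper_eq_same_kind:
  assumes "induced_proper X r f = induced_proper X r g"
    and "is_poset_aut X r f \<longleftrightarrow> is_poset_aut X r g"
    and "strictly_comparable X r u v"
  shows "f u = g u"
  using assms(2,3) fun_cong[OF assms(1), of "(u, v)"] fun_cong[OF assms(1), of "(v, u)"]
  by (auto simp: strictly_comparable_def induced_proper_apply)

lemma induced_proper_eq_opposite_kind:
  assumes "induced_proper X r f = induced_proper X r g"
    and "is_poset_aut X r f" and "\<not> is_poset_aut X r g"
    and "strictly_comparable X r u v"
  shows "f u = g v"
  using assms(2-4) fun_cong[OF assms(1), of "(u, v)"] fun_cong[OF assms(1), of "(v, u)"]
  by (auto simp: strictly_comparable_def induced_proper_apply)

lemma inj_on_induced_proper:
  assumes "poset_connected X r" and "2 < card X"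
  shows "inj_on (induced_proper X r) (carrier (aut_pm_group X r))"
proof (rule inj_onI)
  fix f g
  assume f: "f \<in> carrier (aut_pm_group X r)" and g: "g \<in> carrier (aut_pm_group X r)"
    and eq: "induced_proper X r f = induced_proper X r g"
  have same_kind: "is_poset_aut X r f \<longleftrightarrow> is_poset_aut X r g"
  proof (rule ccontr)
    assume "\<not> ?thesis"
    then obtain h k where hk: "induced_proper X r h = induced_proper X r k"
      "is_poset_aut X r h" "\<not> is_poset_aut X r k" "k \<in> carrier (aut_pm_group X r)"
      using eq f g by metis
    obtain u a b where uab: "a \<noteq> b" "strictly_comparable X r u a" "strictly_comparable X r u b"
      using exists_two_strictly_comparable[OF assms] by blast
    have "k a = k b"
      using induced_proper_eq_opposite_kind[OF hk(1-3)] uab(2,3) by metis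
    moreover have "inj_on k X"
      using hk(4) by (auto simp: aut_pm_group_carrier rel_iso_on_def bij_betw_def)
    ultimately show False
      using uab strictly_comparableD by (metis inj_on_def)
  qed
  show "f = g"
  proof (rule extensionalityI)
    show "f \<in> extensional X" "g \<in> extensional X"
      using f g by (simp_all add: aut_pm_group_def)
    fix x assume "x \<in> X"
    then obtain y where "strictly_comparable X r x y"
      using exists_strictly_comparable[OF assms(1)] assms(2) by fastforce
    then show "f x = g x" using induced_proper_eq_same_kind[OF eq same_kind] by blast
  qed
qed

theorem proposition2p3:
  fixes X :: "'a set" and r :: "'a rel"
  assumes "partial_order_on X r"
    and "finite X"
    and "poset_connected X r"
    and "card X > 2"
  shows "proper_group X r \<cong> aut_pm_group X r"
proof -
  have antisym: "antisym r" using assms(1) by (simp add: partial_order_on_def)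
  have "induced_proper X r \<in> iso (aut_pm_group X r) (proper_group X r)"
  proof (rule isoI)
    show "induced_proper X r \<in> hom (aut_pm_group X r) (proper_group X r)"
    proof (rule homI)
      fix f g
      assume "f \<in> carrier (aut_pm_group X r)" "g \<in> carrier (aut_pm_group X r)"
      then show "induced_proper X r (f \<otimes>\<^bsub>aut_pm_group X r\<^esub> g) =
          induced_proper X r f \<otimes>\<^bsub>proper_group X r\<^esub> induced_proper X r g"
        using induced_proper_compose[OF antisym] by (simp add: aut_pm_group_def proper_group_def)
    qed (rule induced_proper_in_carrier)
    show "bij_betw (induced_proper X r) (carrier (aut_pm_group X r)) (carrier (proper_group X r))"
      using inj_on_induced_proper[OF assms(3,4)] induced_proper_surj[OF antisym]
        induced_proper_in_carrier by (auto simp: bij_betw_def)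
  qed
  then show ?thesis by (rule group.iso_sym[OF group_aut_pm_group is_isoI])
qed

end
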